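(* Let $\mathbb{K}$ be an arbitrary field and let $A$ be a two-dimensional simple evolution $\mathbb{K}$-algebra. Then $A$ is isomorphic to an algebra of exactly one of the following three types (all parameters are nonzero scalars of $\mathbb{K}$): \begin{itemize} \item type $\mathbf{II}^{0,2}_{\lambda}$: the evolution algebra with natural basis $\{e_1,e_2\}$ and structure matrix $\begin{pmatrix}0&\lambda\\ 1&0\end{pmatrix}$ (i.e. $e_1^2=e_2$, $e_2^2=\lambda e_1$), $\lambda\in\mathbb{K}^\times$; \item type $\mathbf{II}^{1,3}_{\lambda}$: structure matrix $\begin{pmatrix}1&\lambda\\ 1&0\end{pmatrix}$ (i.e. $e_1^2=e_1+e_2$, $e_2^2=\lambda e_1$), $\lambda\in\mathbb{K}^\times$; \item type $\mathbf{II}^{2,4}_{\lambda,\mu}$: structure matrix $\begin{pmatrix}1&\lambda\\ \mu&1\end{pmatrix}$ (i.e. $e_1^2=e_1+\mu e_2$, $e_2^2=\lambda e_1+e_2$), $\lambda,\mu\in\mathbb{K}^\times$ with $\lambda\mu\neq 1$. \end{itemize}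
   Context: An evolution algebra over a field $\mathbb{K}$ is a $\mathbb{K}$-algebra $A$ with a basis $\{e_1,\dots,e_n\}$ (a natural basis) such that $e_ie_j=0$ for all $i\neq j$. The structure matrix $(\omega_{ij})$ relative to this basis is defined by $e_i^2=\sum_{j}\omega_{ji}e_j$. A $\mathbb{K}$-algebra $A$ is simple if $A^2\neq 0$ and its only ideals are $0$ and $A$. *)

theory Defs
  imports Complex_Main "HOL-Library.Product_Plus"
begin

definition is_algebra :: "('k::field \<Rightarrow> 'v::ab_group_add \<Rightarrow> 'v) \<Rightarrow> ('v \<Rightarrow> 'v \<Rightarrow> 'v) \<Rightarrow> bool" where
  "is_algebra scale mult \<longleftrightarrow> vector_space scale \<and>
     (\<forall>x. Vector_Spaces.linear scale scale (mult x)) \<and>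
     (\<forall>y. Vector_Spaces.linear scale scale (\<lambda>x. mult x y))"

definition is_evolution_algebra :: "('k::field \<Rightarrow> 'v::ab_group_add \<Rightarrow> 'v) \<Rightarrow> ('v \<Rightarrow> 'v \<Rightarrow> 'v) \<Rightarrow> bool" where
  "is_evolution_algebra scale mult \<longleftrightarrow> is_algebra scale mult \<and>
     (\<exists>B. \<not> module.dependent scale B \<and> module.span scale B = UNIV \<and>
          (\<forall>x\<in>B. \<forall>y\<in>B. x \<noteq> y \<longrightarrow> mult x y = 0))"

definition alg_ideal :: "('k::field \<Rightarrow> 'v::ab_group_add \<Rightarrow> 'v) \<Rightarrow> ('v \<Rightarrow> 'v \<Rightarrow> 'v) \<Rightarrow> 'v set \<Rightarrow> bool" where
  "alg_ideal scale mult I \<longleftrightarrow> module.subspace scale I \<and>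
     (\<forall>a x. x \<in> I \<longrightarrow> mult a x \<in> I \<and> mult x a \<in> I)"

definition is_simple_algebra :: "('k::field \<Rightarrow> 'v::ab_group_add \<Rightarrow> 'v) \<Rightarrow> ('v \<Rightarrow> 'v \<Rightarrow> 'v) \<Rightarrow> bool" where
  "is_simple_algebra scale mult \<longleftrightarrow> (\<exists>x y. mult x y \<noteq> 0) \<and>
     (\<forall>I. alg_ideal scale mult I \<longrightarrow> I = {0} \<or> I = UNIV)"

text \<open>The model space K^2 with natural basis e1 = (1,0), e2 = (0,1).\<close>
definition scale2 :: "'k::field \<Rightarrow> 'k \<times> 'k \<Rightarrow> 'k \<times> 'k" where
  "scale2 c p = (c * fst p, c * snd p)"

text \<open>Two-dimensional evolution algebra with structure matrix (w11 w12; w21 w22),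
  i.e. e1^2 = w11 e1 + w21 e2, e2^2 = w12 e1 + w22 e2, e1 e2 = e2 e1 = 0.\<close>
definition evo_mult2 :: "'k::field \<Rightarrow> 'k \<Rightarrow> 'k \<Rightarrow> 'k \<Rightarrow> 'k \<times> 'k \<Rightarrow> 'k \<times> 'k \<Rightarrow> 'k \<times> 'k" where
  "evo_mult2 w11 w12 w21 w22 p q =
     (fst p * fst q * w11 + snd p * snd q * w12, fst p * fst q * w21 + snd p * snd q * w22)"

definition iso_to_model :: "('k::field \<Rightarrow> 'v::ab_group_add \<Rightarrow> 'v) \<Rightarrow> ('v \<Rightarrow> 'v \<Rightarrow> 'v)
    \<Rightarrow> ('k \<times> 'k \<Rightarrow> 'k \<times> 'k \<Rightarrow> 'k \<times> 'k) \<Rightarrow> bool" where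
  "iso_to_model scale mult m \<longleftrightarrow> (\<exists>f. bij f \<and> Vector_Spaces.linear scale scale2 f \<and>
     (\<forall>x y. f (mult x y) = m (f x) (f y)))"

definition type_II_0_2 :: "('k::field \<Rightarrow> 'v::ab_group_add \<Rightarrow> 'v) \<Rightarrow> ('v \<Rightarrow> 'v \<Rightarrow> 'v) \<Rightarrow> bool" where
  "type_II_0_2 scale mult \<longleftrightarrow> (\<exists>lam::'k. lam \<noteq> 0 \<and> iso_to_model scale mult (evo_mult2 0 lam 1 0))"

definition type_II_1_3 :: "('k::field \<Rightarrow> 'v::ab_group_add \<Rightarrow> 'v) \<Rightarrow> ('v \<Rightarrow> 'v \<Rightarrow> 'v) \<Rightarrow> bool" where
  "type_II_1_3 scale mult \<longleftrightarrow> (\<exists>lam::'k. lam \<noteq> 0 \<and> iso_to_model scale mult (evo_mult2 1 lam 1 0))"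

definition type_II_2_4 :: "('k::field \<Rightarrow> 'v::ab_group_add \<Rightarrow> 'v) \<Rightarrow> ('v \<Rightarrow> 'v \<Rightarrow> 'v) \<Rightarrow> bool" where
  "type_II_2_4 scale mult \<longleftrightarrow> (\<exists>lam mu::'k. lam \<noteq> 0 \<and> mu \<noteq> 0 \<and> lam * mu \<noteq> 1 \<and>
      iso_to_model scale mult (evo_mult2 1 lam mu 1))"

end

theory Submission
  imports Defs
begin

(* A natural basis identifies A with K^2 with e1^2 = a e1 + c e2, e2^2 = b e1 + d e2.
   Simplicity excludes the ideals K e1 (if c = 0), K e2 (if b = 0) and, for a singular
   structure matrix, the line containing A^2; so b, c and ad - bc are nonzero, and rescaling
   the basis vectors (and possibly swapping them) normalises the matrix to one of the three
   listed forms. The types are distinct: for a nonsingular structure matrix, e1 e2 = 0 forces every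
   isomorphism to map natural basis vectors to multiples of natural basis vectors, so the
   number of nonzero diagonal entries (0, 1 or 2) separates the three types. *)

lemma vector_space_scale2: "vector_space (scale2 :: 'k::field \<Rightarrow> 'k \<times> 'k \<Rightarrow> 'k \<times> 'k)"
  unfolding vector_space_def scale2_def by (auto simp: algebra_simps)

lemma linear_inv:
  assumes "Vector_Spaces.linear s1 s2 f" and "bij f"
  shows "Vector_Spaces.linear s2 s1 (inv f)"
proof -
  have "module_pair s1 s2" "module_hom s1 s2 f"
    using assms(1) by (auto simp: module_hom_iff_linear module_pair_def
        module_iff_vector_space Vector_Spaces.linear_iff)
  then show ?thesis
    using assms(2) module_pair.bij_module_hom_imp_inv_module_hom module_hom_iff_linear by metis
qed

lemma inv_multiplicative:
  assumes "bij f" and "\<And>x y. f (mult x y) = m (f x) (f y)"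
  shows "inv f (m x y) = mult (inv f x) (inv f y)"
proof -
  have "m x y = f (mult (inv f x) (inv f y))"
    using assms by (simp add: bij_is_surj surj_f_inv_f)
  then show ?thesis
    using assms(1) by (simp add: bij_is_inj)
qed

lemma iso_to_modelI:
  assumes "bij g" and "Vector_Spaces.linear scale2 scale g"
    and "\<And>x y. g (m x y) = mult (g x) (g y)"
  shows "iso_to_model scale mult m"
  unfolding iso_to_model_def
  using assms bij_imp_bij_inv linear_inv inv_multiplicative by metis

lemma iso_to_model_trans:
  assumes "iso_to_model scale mult m" and "iso_to_model scale2 m m'"
  shows "iso_to_model scale mult m'"
proof -
  obtain f where "bij f" "Vector_Spaces.linear scale scale2 f"
    "\<And>x y. f (mult x y) = m (f x) (f y)"
    using assms(1) unfolding iso_to_model_def by blast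
  moreover obtain h where "bij h" "Vector_Spaces.linear scale2 scale2 h"
    "\<And>x y. h (m x y) = m' (h x) (h y)"
    using assms(2) unfolding iso_to_model_def by blast
  ultimately show ?thesis
    unfolding iso_to_model_def
    by (intro exI[of _ "h \<circ> f"]) (auto intro: bij_comp Vector_Spaces.linear_compose)
qed

lemma iso_to_model_between_models:
  assumes "iso_to_model scale mult m" and "iso_to_model scale mult m'"
  shows "iso_to_model scale2 m m'"
proof -
  obtain f where f: "bij f" "Vector_Spaces.linear scale scale2 f"
    and f_hom: "\<And>x y. f (mult x y) = m (f x) (f y)"
    using assms(1) unfolding iso_to_model_def by blast
  obtain f' where f': "bij f'" "Vector_Spaces.linear scale scale2 f'"
    and f'_hom: "\<And>x y. f' (mult x y) = m' (f' x) (f' y)"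
    using assms(2) unfolding iso_to_model_def by blast
  have "(f' \<circ> inv f) (m x y) = m' ((f' \<circ> inv f) x) ((f' \<circ> inv f) y)" for x y
    using inv_multiplicative[of f mult m, OF f(1) f_hom] by (simp add: f'_hom)
  moreover have "bij (f' \<circ> inv f)"
    using f f' by (simp add: bij_comp bij_imp_bij_inv)
  moreover have "Vector_Spaces.linear scale2 scale2 (f' \<circ> inv f)"
    using f f' by (blast intro: Vector_Spaces.linear_compose linear_inv)
  ultimately show ?thesis
    unfolding iso_to_model_def by blast
qed

lemma bij_coordinates2:
  assumes "vector_space scale"
    and "\<not> module.dependent scale {u, w}" and "module.span scale {u, w} = UNIV" and "u \<noteq> w"
  shows "bij (\<lambda>x. scale (fst x) u + scale (snd x) w)"
proof -
  interpret vs: vector_space scale by (rule assms(1))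
  let ?g = "\<lambda>x. scale (fst x) u + scale (snd x) w"
  have "inj ?g"
  proof (rule injI)
    fix x y
    assume "?g x = ?g y"
    define U where "U v = (if v = u then fst x - fst y else snd x - snd y)" for v
    have "(\<Sum>v\<in>{u, w}. scale (U v) v) = ?g x - ?g y"
      using \<open>u \<noteq> w\<close> by (simp add: U_def vs.scale_left_diff_distrib)
    then have "\<forall>v\<in>{u, w}. U v = 0"
      using \<open>?g x = ?g y\<close> assms(2) vs.dependent_finite[of "{u, w}"] by auto
    then show "x = y"
      using \<open>u \<noteq> w\<close> by (simp add: U_def prod_eq_iff)
  qed
  moreover have "v \<in> range ?g" for v
  proof -
    obtain U where "v = (\<Sum>v\<in>{u, w}. scale (U v) v)"
      using assms(3) vs.span_finite[of "{u, w}"] by blast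
    then have "v = ?g (U u, U w)"
      using \<open>u \<noteq> w\<close> by simp
    then show ?thesis
      by blast
  qed
  ultimately show ?thesis
    unfolding bij_def by blast
qed

lemma iso_to_model_natural_basis:
  fixes scale :: "'k::field \<Rightarrow> 'v::ab_group_add \<Rightarrow> 'v"
  assumes alg: "is_algebra scale mult"
    and "\<not> module.dependent scale {u, w}" and "module.span scale {u, w} = UNIV"
    and "u \<noteq> w" and "mult u w = 0" and "mult w u = 0"
  shows "\<exists>a b c d. iso_to_model scale mult (evo_mult2 a b c d)"
proof -
  interpret vs: vector_space scale
    using alg unfolding is_algebra_def by blast
  have bilinear: "mult x (y + z) = mult x y + mult x z" "mult (y + z) x = mult y x + mult z x"
    "mult x (scale k y) = scale k (mult x y)" "mult (scale k y) x = scale k (mult y x)" for x y z k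
    using alg unfolding is_algebra_def Vector_Spaces.linear_iff by auto
  define g where "g x = scale (fst x) u + scale (snd x) w" for x :: "'k \<times> 'k"
  have "bij g"
    unfolding g_def[abs_def] using vs.vector_space_axioms assms(2-4) by (rule bij_coordinates2)
  have "Vector_Spaces.linear scale2 scale g"
    by (auto simp: Vector_Spaces.linear_iff vector_space_scale2 vs.vector_space_axioms g_def
        scale2_def vs.scale_left_distrib vs.scale_right_distrib)
  moreover obtain a b c d where uu: "mult u u = g (a, c)" and ww: "mult w w = g (b, d)"
    using \<open>bij g\<close> unfolding bij_def surj_def by (metis prod.collapse)
  moreover have "g (evo_mult2 a b c d x y) = mult (g x) (g y)" for x y
    using assms(5,6) uu ww by (simp add: g_def evo_mult2_def bilinear vs.scale_right_distrib
        vs.scale_left_distrib algebra_simps)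
  ultimately show ?thesis
    using \<open>bij g\<close> iso_to_modelI by metis
qed

lemma evolution_algebra_dim2_iso_model:
  fixes scale :: "'k::field \<Rightarrow> 'v::ab_group_add \<Rightarrow> 'v"
  assumes "is_evolution_algebra scale mult" and "vector_space.dim scale (UNIV :: 'v set) = 2"
  shows "\<exists>a b c d. iso_to_model scale mult (evo_mult2 a b c d)"
proof -
  obtain B where alg: "is_algebra scale mult" and indep: "\<not> module.dependent scale B"
    and span: "module.span scale B = UNIV"
    and natural: "\<forall>x\<in>B. \<forall>y\<in>B. x \<noteq> y \<longrightarrow> mult x y = 0"
    using assms(1) unfolding is_evolution_algebra_def by blast
  interpret vs: vector_space scale
    using alg unfolding is_algebra_def by blast
  have "card B = 2"
    using vs.dim_eq_card[of B UNIV] span indep assms(2) by simp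
  then obtain u w where "B = {u, w}" and "u \<noteq> w"
    by (auto simp: card_2_iff)
  then show ?thesis
    using iso_to_model_natural_basis[OF alg] indep span natural by simp
qed

lemma is_simple_algebra_iso_to_model:
  assumes "iso_to_model scale mult m" and "is_simple_algebra scale mult"
  shows "is_simple_algebra scale2 m"
proof -
  obtain f where "bij f" and lin: "Vector_Spaces.linear scale scale2 f"
    and hom: "\<And>x y. f (mult x y) = m (f x) (f y)"
    using assms(1) unfolding iso_to_model_def by blast
  interpret f: Vector_Spaces.linear scale scale2 f by (rule lin)
  have inj: "inj f" and surj: "surj f"
    using \<open>bij f\<close> by (simp_all add: bij_is_inj bij_is_surj)
  obtain x y where "mult x y \<noteq> 0"
    using assms(2) unfolding is_simple_algebra_def by blast
  then have "m (f x) (f y) \<noteq> 0"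
    using inj f.inj_iff_eq_0 hom by metis
  moreover have "J = {0} \<or> J = UNIV" if J: "alg_ideal scale2 m J" for J
  proof -
    have "module.subspace scale (f -` J)"
      using J by (simp add: alg_ideal_def f.subspace_vimage)
    moreover have "mult z x \<in> f -` J \<and> mult x z \<in> f -` J" if "x \<in> f -` J" for z x
      using J that unfolding alg_ideal_def vimage_eq hom by blast
    ultimately have "alg_ideal scale mult (f -` J)"
      unfolding alg_ideal_def by blast
    then have "f -` J = {0} \<or> f -` J = UNIV"
      using assms(2) unfolding is_simple_algebra_def by blast
    then have "f ` f -` J = {0} \<or> f ` f -` J = UNIV"
    proof
      assume "f -` J = {0}"
      then show ?thesis
        by simp
    qed (simp add: surj)
    then show ?thesis
      by (simp add: surj surj_image_vimage_eq)
  qed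
  ultimately show ?thesis
    unfolding is_simple_algebra_def by blast
qed

lemma simple_scale2_no_kernel_ideal:
  fixes \<alpha> \<beta> :: "'k::field"
  assumes "is_simple_algebra scale2 m"
    and "alg_ideal scale2 m {x. \<alpha> * fst x + \<beta> * snd x = 0}"
  shows "\<alpha> = 0 \<and> \<beta> = 0"
proof -
  let ?J = "{x. \<alpha> * fst x + \<beta> * snd x = 0}"
  have "?J = {0} \<or> ?J = UNIV"
    using assms unfolding is_simple_algebra_def by blast
  then show ?thesis
  proof
    assume "?J = {0}"
    moreover have "(\<beta>, - \<alpha>) \<in> ?J"
      by (simp add: mult.commute)
    ultimately show ?thesis
      by (simp add: zero_prod_def)
  next
    assume "?J = UNIV"
    then have "(1, 0) \<in> ?J" and "(0, 1) \<in> ?J"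
      by simp_all
    then show ?thesis
      by simp
  qed
qed

lemma evo_mult2_commute: "evo_mult2 a b c d x y = evo_mult2 a b c d y x"
  by (simp add: evo_mult2_def mult.commute)

lemma alg_ideal_evo_mult2_kernel:
  fixes \<alpha> \<beta> :: "'k::field"
  assumes "\<And>p q. \<alpha> * p + \<beta> * q = 0 \<Longrightarrow>
      p * (\<alpha> * a + \<beta> * c) = 0 \<and> q * (\<alpha> * b + \<beta> * d) = 0"
  shows "alg_ideal scale2 (evo_mult2 a b c d) {x. \<alpha> * fst x + \<beta> * snd x = 0}"
proof -
  let ?J = "{x. \<alpha> * fst x + \<beta> * snd x = 0}"
  have "module scale2"
    by (simp add: module_iff_vector_space vector_space_scale2)
  then have "module.subspace scale2 ?J"
  proof (rule module.subspaceI)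
    fix k x
    assume "x \<in> ?J"
    moreover have "\<alpha> * (k * fst x) + \<beta> * (k * snd x) = k * (\<alpha> * fst x + \<beta> * snd x)"
      by (simp add: algebra_simps)
    ultimately show "scale2 k x \<in> ?J"
      by (simp add: scale2_def)
  qed (auto simp: algebra_simps)
  moreover have "evo_mult2 a b c d z x \<in> ?J \<and> evo_mult2 a b c d x z \<in> ?J"
    if "x \<in> ?J" for z x
  proof -
    have "\<alpha> * fst (evo_mult2 a b c d z x) + \<beta> * snd (evo_mult2 a b c d z x) =
        fst z * (fst x * (\<alpha> * a + \<beta> * c)) + snd z * (snd x * (\<alpha> * b + \<beta> * d))"
      by (simp add: evo_mult2_def algebra_simps)
    moreover have "fst x * (\<alpha> * a + \<beta> * c) = 0 \<and> snd x * (\<alpha> * b + \<beta> * d) = 0"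
      using that by (intro assms) simp
    ultimately show ?thesis
      by (simp add: evo_mult2_commute[of a b c d x z])
  qed
  ultimately show ?thesis
    unfolding alg_ideal_def by blast
qed

lemma simple_evo_mult2_nondegenerate:
  fixes a b c d :: "'k::field"
  assumes "is_simple_algebra scale2 (evo_mult2 a b c d)"
  shows "b \<noteq> 0" and "c \<noteq> 0" and "a * d \<noteq> b * c"
proof -
  note no_kernel_ideal = simple_scale2_no_kernel_ideal[OF assms]
  show "b \<noteq> 0"
  proof
    assume "b = 0"
    then have "alg_ideal scale2 (evo_mult2 a b c d) {x. 1 * fst x + 0 * snd x = 0}"
      by (intro alg_ideal_evo_mult2_kernel) simp
    then show False
      using no_kernel_ideal[of 1 0] by simp
  qed
  show "c \<noteq> 0"
  proof
    assume "c = 0"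
    then have "alg_ideal scale2 (evo_mult2 a b c d) {x. 0 * fst x + 1 * snd x = 0}"
      by (intro alg_ideal_evo_mult2_kernel) simp
    then show False
      using no_kernel_ideal[of 0 1] by simp
  qed
  show "a * d \<noteq> b * c"
  proof
    assume "a * d = b * c"
    \<comment> \<open>then \<open>(a, c)\<close> and \<open>(b, d)\<close>, hence all products, lie on the line \<open>c x = a y\<close>\<close>
    then have "alg_ideal scale2 (evo_mult2 a b c d) {x. c * fst x + (- a) * snd x = 0}"
      by (intro alg_ideal_evo_mult2_kernel) (simp add: algebra_simps)
    then show False
      using no_kernel_ideal[of c "- a"] \<open>c \<noteq> 0\<close> by simp
  qed
qed

text \<open>Passing to the natural basis \<open>\<alpha> e\<^sub>1, \<beta> e\<^sub>2\<close>.\<close>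

lemma evo_mult2_rescale_iso:
  fixes a b c d \<alpha> \<beta> :: "'k::field"
  assumes "\<alpha> \<noteq> 0" and "\<beta> \<noteq> 0"
    and "a' = \<alpha> * a" and "\<alpha> * b' = \<beta> * \<beta> * b" and "\<beta> * c' = \<alpha> * \<alpha> * c" and "d' = \<beta> * d"
  shows "iso_to_model scale2 (evo_mult2 a b c d) (evo_mult2 a' b' c' d')"
proof -
  let ?g = "map_prod ((*) \<alpha>) ((*) \<beta>)"
  have "bij ?g"
    using assms(1,2) by (intro o_bij[of "map_prod (\<lambda>p. p / \<alpha>) (\<lambda>q. q / \<beta>)"]) auto
  moreover have "Vector_Spaces.linear scale2 scale2 ?g"
    by (auto simp: Vector_Spaces.linear_iff vector_space_scale2 scale2_def algebra_simps)
  moreover have "?g (evo_mult2 a' b' c' d' x y) = evo_mult2 a b c d (?g x) (?g y)" for x y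
    using assms(3-) by (simp add: evo_mult2_def algebra_simps)
  ultimately show ?thesis
    by (rule iso_to_modelI[where m = "evo_mult2 a' b' c' d'" and mult = "evo_mult2 a b c d"])
qed

lemma evo_mult2_swap_iso: "iso_to_model scale2 (evo_mult2 a b c d) (evo_mult2 d c b a)"
  unfolding iso_to_model_def
  by (intro exI[of _ prod.swap])
    (auto simp: Vector_Spaces.linear_iff vector_space_scale2 scale2_def evo_mult2_def)

lemma types_iso_to_model:
  assumes "iso_to_model scale mult m"
  shows "type_II_0_2 scale2 m \<Longrightarrow> type_II_0_2 scale mult"
    and "type_II_1_3 scale2 m \<Longrightarrow> type_II_1_3 scale mult"
    and "type_II_2_4 scale2 m \<Longrightarrow> type_II_2_4 scale mult"
  using assms iso_to_model_trans
  unfolding type_II_0_2_def type_II_1_3_def type_II_2_4_def by blast+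

lemma evo_mult2_type_II_0_2:
  fixes b c :: "'k::field"
  assumes "b \<noteq> 0" and "c \<noteq> 0"
  shows "type_II_0_2 scale2 (evo_mult2 0 b c 0)"
proof -
  have "iso_to_model scale2 (evo_mult2 0 b c 0) (evo_mult2 0 (c * c * b) 1 0)"
    using assms by (intro evo_mult2_rescale_iso[of 1 c]) simp_all
  then show ?thesis
    unfolding type_II_0_2_def using assms by (intro exI[of _ "c * c * b"]) simp
qed

lemma evo_mult2_type_II_1_3:
  fixes a b c :: "'k::field"
  assumes "a \<noteq> 0" and "b \<noteq> 0" and "c \<noteq> 0"
  shows "type_II_1_3 scale2 (evo_mult2 a b c 0)"
proof -
  let ?lam = "c * c * b / (a * a * a)"
  have "iso_to_model scale2 (evo_mult2 a b c 0) (evo_mult2 1 ?lam 1 0)"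
    using assms by (intro evo_mult2_rescale_iso[of "1 / a" "c / (a * a)"]) (simp_all add: field_simps)
  then show ?thesis
    unfolding type_II_1_3_def using assms by (intro exI[of _ ?lam]) simp
qed

lemma evo_mult2_type_II_2_4:
  fixes a b c d :: "'k::field"
  assumes "a \<noteq> 0" and "d \<noteq> 0" and "b \<noteq> 0" and "c \<noteq> 0" and "a * d \<noteq> b * c"
  shows "type_II_2_4 scale2 (evo_mult2 a b c d)"
proof -
  let ?lam = "b * a / (d * d)" and ?mu = "c * d / (a * a)"
  have "iso_to_model scale2 (evo_mult2 a b c d) (evo_mult2 1 ?lam ?mu 1)"
    using assms by (intro evo_mult2_rescale_iso[of "1 / a" "1 / d"]) (simp_all add: field_simps)
  moreover have "?lam * ?mu \<noteq> 1"
    using assms by (simp add: field_simps)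
  ultimately show ?thesis
    unfolding type_II_2_4_def using assms by (intro exI[of _ ?lam] exI[of _ ?mu]) simp
qed

lemma simple_evo_mult2_types:
  fixes a b c d :: "'k::field"
  assumes "is_simple_algebra scale2 (evo_mult2 a b c d)"
  shows "type_II_0_2 scale2 (evo_mult2 a b c d) \<or> type_II_1_3 scale2 (evo_mult2 a b c d) \<or>
    type_II_2_4 scale2 (evo_mult2 a b c d)"
proof -
  have b: "b \<noteq> 0" and c: "c \<noteq> 0" and det: "a * d \<noteq> b * c"
    using simple_evo_mult2_nondegenerate[OF assms] by blast+
  consider "a = 0" "d = 0" | "d = 0" "a \<noteq> 0" | "a = 0" "d \<noteq> 0" | "a \<noteq> 0" "d \<noteq> 0"
    by blast
  then show ?thesis
  proof cases
    case 1
    then show ?thesis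
      using evo_mult2_type_II_0_2[OF b c] by simp
  next
    case 2
    then show ?thesis
      using evo_mult2_type_II_1_3[OF _ b c] by simp
  next
    case 3
    then have "type_II_1_3 scale2 (evo_mult2 d c b a)"
      using evo_mult2_type_II_1_3[OF _ c b] by simp
    then show ?thesis
      using types_iso_to_model(2)[OF evo_mult2_swap_iso] by blast
  next
    case 4
    then show ?thesis
      using evo_mult2_type_II_2_4 b c det by blast
  qed
qed

lemma linear_scale2_pair:
  assumes "Vector_Spaces.linear scale2 scale2 h"
  shows "h (p, q) =
    (p * fst (h (1, 0)) + q * fst (h (0, 1)), p * snd (h (1, 0)) + q * snd (h (0, 1)))"
proof -
  interpret h: Vector_Spaces.linear scale2 scale2 h by (rule assms)
  have "h (p, q) = h (scale2 p (1, 0) + scale2 q (0, 1))"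
    by (simp add: scale2_def)
  also have "\<dots> = scale2 p (h (1, 0)) + scale2 q (h (0, 1))"
    by (simp only: h.add h.scale)
  finally show ?thesis
    by (simp add: scale2_def mult.commute)
qed

lemma nonsingular_2x2_kernel:
  fixes a b c d s t :: "'k::field"
  assumes "a * d \<noteq> b * c" and "s * a + t * b = 0" and "s * c + t * d = 0"
  shows "s = 0 \<and> t = 0"
proof -
  have "(a * d - b * c) * s = d * (s * a + t * b) - b * (s * c + t * d)"
    and "(a * d - b * c) * t = a * (s * c + t * d) - c * (s * a + t * b)"
    by (simp_all add: algebra_simps)
  then have "(a * d - b * c) * s = 0" and "(a * d - b * c) * t = 0"
    using assms(2,3) by simp_all
  then show ?thesis
    using assms(1) by simp
qed

lemma evo_mult2_iso_monomial:
  fixes h :: "'k::field \<times> 'k \<Rightarrow> 'k \<times> 'k"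
  assumes "inj h" and lin: "Vector_Spaces.linear scale2 scale2 h"
    and hom: "\<And>x y. h (evo_mult2 a b c d x y) = evo_mult2 a' b' c' d' (h x) (h y)"
    and "a' * d' \<noteq> b' * c'"
  shows "\<exists>x y. x \<noteq> 0 \<and> y \<noteq> 0 \<and>
    (h (1, 0) = (x, 0) \<and> h (0, 1) = (0, y) \<or> h (1, 0) = (0, x) \<and> h (0, 1) = (y, 0))"
proof -
  interpret h: Vector_Spaces.linear scale2 scale2 h by (rule lin)
  obtain x1 y1 x2 y2 where e1: "h (1, 0) = (x1, y1)" and e2: "h (0, 1) = (x2, y2)"
    by (metis prod.exhaust)
  have "h x \<noteq> 0" if "x \<noteq> 0" for x
    using that \<open>inj h\<close> h.inj_iff_eq_0 by blast
  from this[of "(1, 0)"] this[of "(0, 1)"]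
  have nz1: "x1 \<noteq> 0 \<or> y1 \<noteq> 0" and nz2: "x2 \<noteq> 0 \<or> y2 \<noteq> 0"
    by (auto simp: e1 e2 zero_prod_def)
  have "evo_mult2 a' b' c' d' (h (1, 0)) (h (0, 1)) = h (evo_mult2 a b c d (1, 0) (0, 1))"
    by (simp add: hom)
  also have "\<dots> = 0"
    by (simp add: evo_mult2_def h.zero flip: zero_prod_def)
  finally have "x1 * x2 * a' + y1 * y2 * b' = 0" and "x1 * x2 * c' + y1 * y2 * d' = 0"
    by (simp_all add: e1 e2 evo_mult2_def zero_prod_def)
  then have "x1 * x2 = 0" and "y1 * y2 = 0"
    using nonsingular_2x2_kernel[OF assms(4)] by blast+
  then show ?thesis
    using nz1 nz2 by (cases "x1 = 0") (auto simp: e1 e2)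
qed

lemma evo_mult2_iso_diagonal:
  fixes a b c d a' b' c' d' :: "'k::field"
  assumes "iso_to_model scale2 (evo_mult2 a b c d) (evo_mult2 a' b' c' d')"
    and "a' * d' \<noteq> b' * c'"
  shows "\<exists>x y. x \<noteq> 0 \<and> y \<noteq> 0 \<and> (a = x * a' \<and> d = y * d' \<or> a = x * d' \<and> d = y * a')"
proof -
  obtain h where "bij h" and lin: "Vector_Spaces.linear scale2 scale2 h"
    and hom: "\<And>x y. h (evo_mult2 a b c d x y) = evo_mult2 a' b' c' d' (h x) (h y)"
    using assms(1) unfolding iso_to_model_def by blast
  obtain x y where "x \<noteq> 0" "y \<noteq> 0" and
    e: "h (1, 0) = (x, 0) \<and> h (0, 1) = (0, y) \<or> h (1, 0) = (0, x) \<and> h (0, 1) = (y, 0)"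
    using evo_mult2_iso_monomial[OF bij_is_inj[OF \<open>bij h\<close>] lin hom assms(2)] by blast
  have sq: "h (a, c) = evo_mult2 a' b' c' d' (h (1, 0)) (h (1, 0))"
    "h (b, d) = evo_mult2 a' b' c' d' (h (0, 1)) (h (0, 1))"
    using hom[of "(1, 0)" "(1, 0)"] hom[of "(0, 1)" "(0, 1)"] by (simp_all add: evo_mult2_def)
  from e show ?thesis
  proof
    assume e': "h (1, 0) = (x, 0) \<and> h (0, 1) = (0, y)"
    then have "h (p, q) = (p * x, q * y)" for p q
      using linear_scale2_pair[OF lin, of p q] by simp
    then have "a * x = (x * a') * x" and "d * y = (y * d') * y"
      using sq e' by (simp_all add: evo_mult2_def)
    then show ?thesis
      using \<open>x \<noteq> 0\<close> \<open>y \<noteq> 0\<close> by auto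
  next
    assume e': "h (1, 0) = (0, x) \<and> h (0, 1) = (y, 0)"
    then have "h (p, q) = (q * y, p * x)" for p q
      using linear_scale2_pair[OF lin, of p q] by simp
    then have "a * x = (x * d') * x" and "d * y = (y * a') * y"
      using sq e' by (simp_all add: evo_mult2_def)
    then show ?thesis
      using \<open>x \<noteq> 0\<close> \<open>y \<noteq> 0\<close> by auto
  qed
qed

theorem theorem3p4:
  fixes scale :: "'k::field \<Rightarrow> 'v::ab_group_add \<Rightarrow> 'v"
    and mult :: "'v \<Rightarrow> 'v \<Rightarrow> 'v"
  assumes "is_evolution_algebra scale mult"
    and "vector_space.dim scale (UNIV :: 'v set) = 2"
    and "is_simple_algebra scale mult"
  shows "(type_II_0_2 scale mult \<or> type_II_1_3 scale mult \<or> type_II_2_4 scale mult) \<and>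
    \<not> (type_II_0_2 scale mult \<and> type_II_1_3 scale mult) \<and>
    \<not> (type_II_0_2 scale mult \<and> type_II_2_4 scale mult) \<and>
    \<not> (type_II_1_3 scale mult \<and> type_II_2_4 scale mult)"
proof (intro conjI notI)
  obtain a b c d where iso: "iso_to_model scale mult (evo_mult2 a b c d)"
    using evolution_algebra_dim2_iso_model[OF assms(1,2)] by blast
  then have "is_simple_algebra scale2 (evo_mult2 a b c d)"
    using assms(3) by (rule is_simple_algebra_iso_to_model)
  then show "type_II_0_2 scale mult \<or> type_II_1_3 scale mult \<or> type_II_2_4 scale mult"
    using simple_evo_mult2_types types_iso_to_model[OF iso] by blast
next
  assume "type_II_0_2 scale mult \<and> type_II_1_3 scale mult"
  then obtain l l' :: 'k where "l' \<noteq> 0"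
    and "iso_to_model scale2 (evo_mult2 0 l 1 0) (evo_mult2 1 l' 1 0)"
    unfolding type_II_0_2_def type_II_1_3_def by (blast intro: iso_to_model_between_models)
  then show False
    using evo_mult2_iso_diagonal by fastforce
next
  assume "type_II_0_2 scale mult \<and> type_II_2_4 scale mult"
  then obtain l l' m' :: 'k where "l' * m' \<noteq> 1"
    and "iso_to_model scale2 (evo_mult2 0 l 1 0) (evo_mult2 1 l' m' 1)"
    unfolding type_II_0_2_def type_II_2_4_def by (blast intro: iso_to_model_between_models)
  then show False
    using evo_mult2_iso_diagonal by fastforce
next
  assume "type_II_1_3 scale mult \<and> type_II_2_4 scale mult"
  then obtain l l' m' :: 'k where "l' * m' \<noteq> 1"
    and "iso_to_model scale2 (evo_mult2 1 l 1 0) (evo_mult2 1 l' m' 1)"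
    unfolding type_II_1_3_def type_II_2_4_def by (blast intro: iso_to_model_between_models)
  then show False
    using evo_mult2_iso_diagonal by fastforce
qed

end
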